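(* Fix $m\ge1$, $\theta\in(0,1]$ and a homogeneous voting rule $f$. Suppose there is $\epsilon>0$ such that $f$ is not CM in every continuous profile $P'$ of total weight $1$ with $\max_p|w(p,P')-w(p,\hat P)|<\epsilon$. Then for every $n\ge1$, $$\rho(f,m,n,\theta)\le 2\,m!\,e^{-2\epsilon^2 n}.$$
   Context: A ranking is a strict total order on $\{1,\dots,m\}$. A discrete profile $P$ consists of candidates, $n$ voters and a ranking $P_v$ per voter; $w(p,P)$ is the number of voters with ranking $p$. A continuous profile consists of candidates, total weight $w(P)>0$ and weights $w(p,P)\ge0$ summing to $w(P)$; the normalized profile $\bar P$ has weights $w(p,P)/w(P)$. A voting rule maps every profile (discrete or continuous) to one of its candidates; homogeneous means $f(P)=f(\bar P)$. CM (discrete): $f$ is CM in discrete $P$ if there is a discrete $Q$ with the same candidates and voters, $f(Q)\ne f(P)$, and every voter $v$ with $Q_v\ne P_v$ prefers $f(Q)$ to $f(P)$ according to $P_v$. CM (continuous): $f$ is CM in continuous $P$ if there is a continuous $Q$ with the same candidates and total weight, $f(Q)\ne f(P)$, and every ranking $p$ with $w(p,Q)<w(p,P)$ prefers $f(Q)$ to $f(P)$. Perturbed Culture ($m,n\ge1$, $\theta\in(0,1]$): random discrete profile with candidates $\{1,\dots,m\}$, voters $\{1,\dots,n\}$, each voter independently having ranking $1\succ\cdots\succ m$ with probability $\theta$ and a uniformly random ranking with probability $1-\theta$. $\hat P$: total weight $1$, weight $\theta+\frac{1-\theta}{m!}$ on $1\succ\cdots\succ m$ and $\frac{1-\theta}{m!}$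 on each other ranking. $\rho(f,m,n,\theta)$: probability that $f$ is CM in the random profile. *)

theory Defs
  imports Complex_Main "HOL-Library.FuncSet"
begin

text \<open>A ranking over candidates 1..m is a list enumerating 1..m without repetition,
  most preferred first.\<close>
type_synonym ranking = "nat list"

definition rankings :: "nat \<Rightarrow> ranking set" where
  "rankings m = {p. distinct p \<and> set p = {1..m}}"

definition prefers :: "ranking \<Rightarrow> nat \<Rightarrow> nat \<Rightarrow> bool" where
  "prefers p a b \<longleftrightarrow> (\<exists>i j. i < j \<and> j < length p \<and> p ! i = a \<and> p ! j = b)"

definition disc_profiles :: "nat \<Rightarrow> nat \<Rightarrow> (nat \<Rightarrow> ranking) set" where
  "disc_profiles m n = PiE {1..n} (\<lambda>_. rankings m)"

definition dweight :: "nat \<Rightarrow> (nat \<Rightarrow> ranking) \<Rightarrow> ranking \<Rightarrow> real" where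
  "dweight n V p = real (card {v \<in> {1..n}. V v = p})"

definition total_weight :: "nat \<Rightarrow> (ranking \<Rightarrow> real) \<Rightarrow> real" where
  "total_weight m w = (\<Sum>p\<in>rankings m. w p)"

definition cont_profile :: "nat \<Rightarrow> (ranking \<Rightarrow> real) \<Rightarrow> bool" where
  "cont_profile m w \<longleftrightarrow> (\<forall>p. 0 \<le> w p) \<and> (\<forall>p. p \<notin> rankings m \<longrightarrow> w p = 0)
     \<and> total_weight m w > 0"

definition normalize :: "nat \<Rightarrow> (ranking \<Rightarrow> real) \<Rightarrow> ranking \<Rightarrow> real" where
  "normalize m w = (\<lambda>p. w p / total_weight m w)"

text \<open>A voting rule is given by its action on discrete profiles (fd m n V) and on
  continuous profiles (fc m w), always returning a candidate.\<close>
definition voting_rule ::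
  "(nat \<Rightarrow> nat \<Rightarrow> (nat \<Rightarrow> ranking) \<Rightarrow> nat) \<Rightarrow> (nat \<Rightarrow> (ranking \<Rightarrow> real) \<Rightarrow> nat) \<Rightarrow> bool" where
  "voting_rule fd fc \<longleftrightarrow>
     (\<forall>m n V. m \<ge> 1 \<longrightarrow> n \<ge> 1 \<longrightarrow> V \<in> disc_profiles m n \<longrightarrow> fd m n V \<in> {1..m}) \<and>
     (\<forall>m w. m \<ge> 1 \<longrightarrow> cont_profile m w \<longrightarrow> fc m w \<in> {1..m})"

definition homogeneous ::
  "(nat \<Rightarrow> nat \<Rightarrow> (nat \<Rightarrow> ranking) \<Rightarrow> nat) \<Rightarrow> (nat \<Rightarrow> (ranking \<Rightarrow> real) \<Rightarrow> nat) \<Rightarrow> bool" where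
  "homogeneous fd fc \<longleftrightarrow>
     (\<forall>m n V. m \<ge> 1 \<longrightarrow> n \<ge> 1 \<longrightarrow> V \<in> disc_profiles m n \<longrightarrow>
        fd m n V = fc m (\<lambda>p. dweight n V p / real n)) \<and>
     (\<forall>m w. m \<ge> 1 \<longrightarrow> cont_profile m w \<longrightarrow> fc m w = fc m (normalize m w))"

definition CM_disc ::
  "(nat \<Rightarrow> nat \<Rightarrow> (nat \<Rightarrow> ranking) \<Rightarrow> nat) \<Rightarrow> nat \<Rightarrow> nat \<Rightarrow> (nat \<Rightarrow> ranking) \<Rightarrow> bool" where
  "CM_disc fd m n P \<longleftrightarrow> (\<exists>Q \<in> disc_profiles m n. fd m n Q \<noteq> fd m n P \<and>
     (\<forall>v \<in> {1..n}. Q v \<noteq> P v \<longrightarrow> prefers (P v) (fd m n Q) (fd m n P)))"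

definition CM_cont ::
  "(nat \<Rightarrow> (ranking \<Rightarrow> real) \<Rightarrow> nat) \<Rightarrow> nat \<Rightarrow> (ranking \<Rightarrow> real) \<Rightarrow> bool" where
  "CM_cont fc m P \<longleftrightarrow> (\<exists>Q. cont_profile m Q \<and> total_weight m Q = total_weight m P \<and>
     fc m Q \<noteq> fc m P \<and>
     (\<forall>p \<in> rankings m. Q p < P p \<longrightarrow> prefers p (fc m Q) (fc m P)))"

definition id_ranking :: "nat \<Rightarrow> ranking" where
  "id_ranking m = [1..<m+1]"

text \<open>The continuous profile hat P; also the probability of a single voter's ranking
  under Perturbed Culture.\<close>
definition Phat :: "nat \<Rightarrow> real \<Rightarrow> ranking \<Rightarrow> real" where
  "Phat m \<theta> p = (if p \<in> rankings m then
      (if p = id_ranking m then \<theta> else 0) + (1 - \<theta>) / fact m else 0)"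

text \<open>rho(f,m,n,theta): probability under Perturbed Culture that f is CM.\<close>
definition rho ::
  "(nat \<Rightarrow> nat \<Rightarrow> (nat \<Rightarrow> ranking) \<Rightarrow> nat) \<Rightarrow> nat \<Rightarrow> nat \<Rightarrow> real \<Rightarrow> real" where
  "rho fd m n \<theta> = (\<Sum>V \<in> disc_profiles m n.
      if CM_disc fd m n V then (\<Prod>v\<in>{1..n}. Phat m \<theta> (V v)) else 0)"

end

theory Submission
  imports Defs "HOL-Probability.Probability" "HOL-Combinatorics.Multiset_Permutations"
begin

text \<open>Under Perturbed Culture the number of voters holding a fixed ranking r is
  binomially distributed with parameter \<open>Phat m \<theta> r\<close>, so by Hoeffding's inequality the
  empirical weight of r deviates from \<open>Phat m \<theta> r\<close> by at least \<epsilon> with probability at most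
  \<open>2 exp (-2 \<epsilon>\<^sup>2 n)\<close>. If f is CM in a discrete profile, then by homogeneity it is CM in the
  normalized continuous profile, which therefore lies outside the \<epsilon>-neighbourhood of
  \<open>Phat\<close>; hence some ranking deviates by at least \<epsilon>, and a union bound over the m! rankings
  gives the claim.\<close>

lemma rankings_eq_permutations_of_set: "rankings m = permutations_of_set {1..m}"
  by (auto simp: rankings_def permutations_of_set_def)

lemma finite_rankings: "finite (rankings m)"
  by (simp add: rankings_eq_permutations_of_set)

lemma card_rankings: "card (rankings m) = fact m"
  by (simp add: rankings_eq_permutations_of_set)

lemma id_ranking_in_rankings: "id_ranking m \<in> rankings m"
  by (auto simp: rankings_def id_ranking_def)

lemma finite_disc_profiles: "finite (disc_profiles m n)"
  by (simp add: disc_profiles_def finite_PiE finite_rankings)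

lemma Phat_nonneg: "0 \<le> \<theta> \<Longrightarrow> \<theta> \<le> 1 \<Longrightarrow> 0 \<le> Phat m \<theta> p"
  by (auto simp: Phat_def)

lemma sum_Phat: "(\<Sum>p\<in>rankings m. Phat m \<theta> p) = 1"
proof -
  have "(\<Sum>p\<in>rankings m. Phat m \<theta> p) =
      (\<Sum>p\<in>rankings m. if p = id_ranking m then \<theta> else 0) + (\<Sum>p\<in>rankings m. (1 - \<theta>) / fact m)"
    by (simp add: Phat_def sum.distrib)
  also have "\<dots> = \<theta> + (1 - \<theta>)"
    by (simp add: finite_rankings id_ranking_in_rankings card_rankings)
  finally show ?thesis by simp
qed

lemma map_pmf_eq_bernoulli_pmf: "map_pmf (\<lambda>x. x = r) D = bernoulli_pmf (pmf D r)"
proof (rule pmf_eqI)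
  fix b :: bool
  have "pmf (map_pmf (\<lambda>x. x = r) D) b = measure_pmf.prob D ((\<lambda>x. x = r) -` {b})"
    by (simp add: pmf_map)
  also have "\<dots> = (if b then pmf D r else 1 - pmf D r)"
  proof (cases b)
    case True
    then have "(\<lambda>x. x = r) -` {b} = {r}" by auto
    with True show ?thesis by (simp add: measure_pmf_single)
  next
    case False
    then have "(\<lambda>x. x = r) -` {b} = UNIV - {r}" by auto
    with False show ?thesis
      using measure_pmf.prob_compl[of "{r}" D] by (simp add: measure_pmf_single)
  qed
  finally show "pmf (map_pmf (\<lambda>x. x = r) D) b = pmf (bernoulli_pmf (pmf D r)) b"
    by (simp add: pmf_le_1)
qed

lemma count_Pi_pmf_eq_binomial_pmf:
  assumes "finite I"
  shows "map_pmf (\<lambda>V. card {v \<in> I. V v = r}) (Pi_pmf I dflt (\<lambda>_. D)) =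
           binomial_pmf (card I) (pmf D r)"
proof -
  have "binomial_pmf (card I) (pmf D r) =
      map_pmf (\<lambda>f. card {v \<in> I. f v}) (Pi_pmf I (dflt = r) (\<lambda>_. bernoulli_pmf (pmf D r)))"
    by (rule binomial_pmf_altdef') (auto simp: assms pmf_le_1)
  also have "Pi_pmf I (dflt = r) (\<lambda>_. bernoulli_pmf (pmf D r)) =
      map_pmf ((\<circ>) (\<lambda>x. x = r)) (Pi_pmf I dflt (\<lambda>_. D))"
    by (simp add: Pi_pmf_map assms flip: map_pmf_eq_bernoulli_pmf)
  finally show ?thesis
    by (simp add: pmf.map_comp o_def)
qed

lemma prob_frequency_deviation_Pi_pmf:
  fixes \<epsilon> :: real
  assumes "finite I" "I \<noteq> {}" "\<epsilon> \<ge> 0"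
  shows "measure_pmf.prob (Pi_pmf I dflt (\<lambda>_. D))
           {V. \<epsilon> \<le> \<bar>card {v \<in> I. V v = r} / card I - pmf D r\<bar>}
         \<le> 2 * exp (- 2 * \<epsilon>\<^sup>2 * card I)"
proof -
  interpret binomial_distribution "card I" "pmf D r"
    by unfold_locales (simp add: pmf_le_1)
  have "measure_pmf.prob (Pi_pmf I dflt (\<lambda>_. D))
          {V. \<epsilon> \<le> \<bar>card {v \<in> I. V v = r} / card I - pmf D r\<bar>}
      = measure_pmf.prob (binomial_pmf (card I) (pmf D r)) {k. \<epsilon> \<le> \<bar>k / card I - pmf D r\<bar>}"
    unfolding count_Pi_pmf_eq_binomial_pmf[OF assms(1), where dflt = dflt, symmetric]
    by (simp add: vimage_def)
  also have "\<dots> \<le> 2 * exp (- 2 * card I * \<epsilon>\<^sup>2)"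
    using assms by (intro prob_abs_ge') (auto simp: card_gt_0_iff)
  finally show ?thesis
    by (simp add: mult.commute mult.left_commute)
qed

definition voter_pmf :: "nat \<Rightarrow> real \<Rightarrow> ranking pmf" where
  "voter_pmf m \<theta> = embed_pmf (Phat m \<theta>)"

definition perturbed_culture :: "nat \<Rightarrow> real \<Rightarrow> nat \<Rightarrow> (nat \<Rightarrow> ranking) pmf" where
  "perturbed_culture m \<theta> n = Pi_pmf {1..n} undefined (\<lambda>_. voter_pmf m \<theta>)"

lemma pmf_voter_pmf:
  assumes "0 \<le> \<theta>" "\<theta> \<le> 1"
  shows "pmf (voter_pmf m \<theta>) = Phat m \<theta>"
proof
  fix p
  have "(\<integral>\<^sup>+x. ennreal (Phat m \<theta> x) \<partial>count_space UNIV) = (\<Sum>x\<in>rankings m. ennreal (Phat m \<theta> x))"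
    by (rule nn_integral_count_space') (auto simp: finite_rankings Phat_def)
  also have "\<dots> = 1"
    using assms by (simp add: Phat_nonneg sum_Phat sum_ennreal)
  finally show "pmf (voter_pmf m \<theta>) p = Phat m \<theta> p"
    unfolding voter_pmf_def using assms by (intro pmf_embed_pmf) (auto simp: Phat_nonneg)
qed

lemma pmf_perturbed_culture:
  assumes "0 \<le> \<theta>" "\<theta> \<le> 1" "V \<in> disc_profiles m n"
  shows "pmf (perturbed_culture m \<theta> n) V = (\<Prod>v\<in>{1..n}. Phat m \<theta> (V v))"
  using assms unfolding perturbed_culture_def
  by (subst pmf_Pi') (auto simp: disc_profiles_def PiE_def extensional_def pmf_voter_pmf)

lemma rho_eq_prob_perturbed_culture:
  assumes "0 \<le> \<theta>" "\<theta> \<le> 1"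
  shows "rho fd m n \<theta> =
           measure_pmf.prob (perturbed_culture m \<theta> n) {V \<in> disc_profiles m n. CM_disc fd m n V}"
proof -
  have "rho fd m n \<theta> = (\<Sum>V | V \<in> disc_profiles m n \<and> CM_disc fd m n V. \<Prod>v\<in>{1..n}. Phat m \<theta> (V v))"
    unfolding rho_def by (rule sum.inter_filter[symmetric, OF finite_disc_profiles])
  also have "\<dots> = (\<Sum>V | V \<in> disc_profiles m n \<and> CM_disc fd m n V. pmf (perturbed_culture m \<theta> n) V)"
    using assms by (simp add: pmf_perturbed_culture)
  finally show ?thesis
    by (simp add: measure_measure_pmf_finite finite_disc_profiles)
qed

definition empirical_profile :: "nat \<Rightarrow> (nat \<Rightarrow> ranking) \<Rightarrow> ranking \<Rightarrow> real" where
  "empirical_profile n V p = dweight n V p / real n"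

lemma sum_dweight:
  assumes "V \<in> disc_profiles m n"
  shows "(\<Sum>p\<in>rankings m. dweight n V p) = real n"
proof -
  have "V ` {1..n} \<subseteq> rankings m"
    using assms by (auto simp: disc_profiles_def)
  then have "(\<Sum>p\<in>rankings m. card {v \<in> {1..n}. V v = p}) = card {1..n}"
    using sum.group[of "{1..n}" "rankings m" V "\<lambda>_. 1::nat"] by (simp add: finite_rankings)
  then show ?thesis
    unfolding dweight_def by (metis card_atLeastAtMost diff_Suc_1 of_nat_sum)
qed

lemma total_weight_empirical_profile:
  "V \<in> disc_profiles m n \<Longrightarrow> n \<ge> 1 \<Longrightarrow> total_weight m (empirical_profile n V) = 1"
  by (simp add: total_weight_def empirical_profile_def sum_dweight flip: sum_divide_distrib)

lemma cont_profile_empirical_profile: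
  assumes "V \<in> disc_profiles m n" "n \<ge> 1"
  shows "cont_profile m (empirical_profile n V)"
proof -
  have "dweight n V p = 0" if "p \<notin> rankings m" for p
    using assms(1) that by (auto simp: dweight_def disc_profiles_def)
  then show ?thesis
    using total_weight_empirical_profile[OF assms]
    by (auto simp: cont_profile_def empirical_profile_def dweight_def)
qed

text \<open>Every ranking whose weight drops from P to Q is held in P by some voter who changed her
  ballot, i.e. by a manipulator; this is what transfers manipulability to the normalized profile.\<close>

lemma CM_disc_imp_CM_cont_empirical_profile:
  assumes hom: "homogeneous fd fc" and "m \<ge> 1" "n \<ge> 1"
    and V: "V \<in> disc_profiles m n" and "CM_disc fd m n V"
  shows "CM_cont fc m (empirical_profile n V)"
proof -
  obtain Q where Q: "Q \<in> disc_profiles m n" "fd m n Q \<noteq> fd m n V"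
    and manip: "\<forall>v\<in>{1..n}. Q v \<noteq> V v \<longrightarrow> prefers (V v) (fd m n Q) (fd m n V)"
    using \<open>CM_disc fd m n V\<close> unfolding CM_disc_def by blast
  have fc_empirical: "fc m (empirical_profile n W) = fd m n W" if "W \<in> disc_profiles m n" for W
    using hom \<open>m \<ge> 1\<close> \<open>n \<ge> 1\<close> that by (simp add: homogeneous_def empirical_profile_def[abs_def])
  have "prefers p (fd m n Q) (fd m n V)"
    if "empirical_profile n Q p < empirical_profile n V p" for p
  proof -
    have "card {v \<in> {1..n}. Q v = p} < card {v \<in> {1..n}. V v = p}"
      using that \<open>n \<ge> 1\<close> by (simp add: empirical_profile_def dweight_def divide_less_cancel)
    moreover have "finite {v \<in> {1..n}. Q v = p}"
      by simp
    ultimately have "\<not> {v \<in> {1..n}. V v = p} \<subseteq> {v \<in> {1..n}. Q v = p}"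
      by (meson card_mono not_le)
    then obtain v where "v \<in> {1..n}" "V v = p" "Q v \<noteq> p"
      by blast
    with manip show ?thesis by metis
  qed
  then show ?thesis
    unfolding CM_cont_def using Q \<open>n \<ge> 1\<close> V
    by (intro exI[of _ "empirical_profile n Q"])
       (simp add: fc_empirical cont_profile_empirical_profile total_weight_empirical_profile)
qed

lemma prob_empirical_profile_deviation:
  assumes "0 \<le> \<theta>" "\<theta> \<le> 1" "n \<ge> 1" "\<epsilon> \<ge> 0"
  shows "measure_pmf.prob (perturbed_culture m \<theta> n)
           {V. \<epsilon> \<le> \<bar>empirical_profile n V r - Phat m \<theta> r\<bar>}
         \<le> 2 * exp (- 2 * \<epsilon>\<^sup>2 * real n)"
  using prob_frequency_deviation_Pi_pmf[of "{1..n}" \<epsilon> undefined "voter_pmf m \<theta>" r] assms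
  by (simp add: perturbed_culture_def empirical_profile_def dweight_def pmf_voter_pmf)

theorem mainTheorem13:
  fixes fd :: "nat \<Rightarrow> nat \<Rightarrow> (nat \<Rightarrow> ranking) \<Rightarrow> nat"
    and fc :: "nat \<Rightarrow> (ranking \<Rightarrow> real) \<Rightarrow> nat"
    and m :: nat and \<theta> :: real and \<epsilon> :: real
  assumes "m \<ge> 1" and "0 < \<theta>" and "\<theta> \<le> 1"
    and "voting_rule fd fc" and "homogeneous fd fc"
    and "\<epsilon> > 0"
    and "\<forall>P'. cont_profile m P' \<and> total_weight m P' = 1 \<and>
              (\<forall>p \<in> rankings m. \<bar>P' p - Phat m \<theta> p\<bar> < \<epsilon>) \<longrightarrow> \<not> CM_cont fc m P'"
  shows "\<forall>n \<ge> 1. rho fd m n \<theta> \<le> 2 * fact m * exp (- 2 * \<epsilon>^2 * real n)"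
proof (intro allI impI)
  fix n :: nat assume "n \<ge> 1"
  let ?M = "perturbed_culture m \<theta> n"
  let ?deviates = "\<lambda>r. {V. \<epsilon> \<le> \<bar>empirical_profile n V r - Phat m \<theta> r\<bar>}"
  have "{V \<in> disc_profiles m n. CM_disc fd m n V} \<subseteq> (\<Union>r\<in>rankings m. ?deviates r)"
  proof safe
    fix V assume V: "V \<in> disc_profiles m n" and "CM_disc fd m n V"
    then have "CM_cont fc m (empirical_profile n V)"
      using assms(1,5) \<open>n \<ge> 1\<close> by (intro CM_disc_imp_CM_cont_empirical_profile)
    then show "V \<in> (\<Union>r\<in>rankings m. ?deviates r)"
      using assms(7) V \<open>n \<ge> 1\<close>
      by (force simp: not_less cont_profile_empirical_profile total_weight_empirical_profile)
  qed
  then have "rho fd m n \<theta> \<le> measure_pmf.prob ?M (\<Union>r\<in>rankings m. ?deviates r)"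
    using assms(2,3) by (simp add: rho_eq_prob_perturbed_culture measure_pmf.finite_measure_mono)
  also have "\<dots> \<le> (\<Sum>r\<in>rankings m. measure_pmf.prob ?M (?deviates r))"
    by (rule measure_pmf.finite_measure_subadditive_finite) (auto simp: finite_rankings)
  also have "\<dots> \<le> (\<Sum>r\<in>rankings m. 2 * exp (- 2 * \<epsilon>\<^sup>2 * real n))"
    using assms(2,3,6) \<open>n \<ge> 1\<close> by (intro sum_mono prob_empirical_profile_deviation) auto
  finally show "rho fd m n \<theta> \<le> 2 * fact m * exp (- 2 * \<epsilon>^2 * real n)"
    by (simp add: card_rankings)
qed

end
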